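(* Let $H=[H_X\,|\,H_Z]$ be the $(n-k)\times 2n$ binary check matrix of an $[[n,k,d]]$ stabilizer code. By row operations (Gaussian elimination) and a reordering of the qubits, $H$ can be written in the standard form \[ H=\left[\begin{array}{cc|cc} A & I_{s\times s} & D & 0\\ C & 0 & B & I_{s\times s}\\ E & 0 & F & 0\end{array}\right],\qquad 0\le s\le n-k , \] where $A,B,C,D,E,F$ are binary matrices of appropriate sizes. Then for every integer $c$ with $0\le c\le s$, the matrix obtained from $H$ by deleting the last $c$ columns of $H_X$ and the last $c$ columns of $H_Z$ is the check matrix of the simplified stabilizer group of an $[[n-c,k,d;c]]_{AB}$ EAQEC code; in particular this code can correct any Pauli error of weight at most $\lfloor\frac{d-1}{2}\rfloor$ acting on Alice's $n-c$ qubits together with Bob's $c$ qubits. Moreover, if the stabilizer code is nondegenerate, the elimination can be carried out so that the resulting $s$ satisfies \[ d-1\le s\le \left\lfloor \tfrac{n-k}{2}\right\rfloor . \]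
   Context: Pauli operators on $n$ qubits are considered up to phase, i.e. as tensor products $M_1\otimes\cdots\otimes M_n$ with $M_j\in\{I,X,Y,Z\}$; the weight of such an operator is the number of non-identity factors. An $[[n,k,d]]$ stabilizer code is defined by an abelian subgroup $\mathcal S$ of the $n$-qubit Pauli group not containing $-I$, with $n-k$ independent generators; $d$ is the minimum weight of an element of $\mathcal N(\mathcal S)\setminus\mathcal S$, where $\mathcal N(\mathcal S)$ is the normalizer of $\mathcal S$ in the Pauli group. The check matrix has one row per generator; a Pauli $X^{a}Z^{b}$ (with $a,b\in\{0,1\}^n$) corresponds to the row $[a\,|\,b]$. The code is nondegenerate if every non-identity element of $\mathcal N(\mathcal S)$ has weight at least $d$. An $[[n',k,d;c]]$ entanglement-assisted (EAQEC) code: Alice and Bob share $c$ Bell pairs $\frac{1}{\sqrt2}(|00\rangle+|11\rangle)$; Alice encodes $k$ qubits into $n'$ qubits (including her halves of the ebits) with a Clifford unitary. It is specified by a simplified stabilizer group $\mathcal S'$ on Alice's $n'$ qubits generated by operators $g'_1,h'_1,\dots,g'_c,h'_c,g'_{c+1},\dots,g'_{n'-k-c}$, where $g'_i,h'_i$ anticommute for $i\le c$ and all other pairs of generators commute; the encoded state on all $n'+c$ qubits is stabilized by $g'_i\otimes Z_i$, $h'_i\otimes X_i$ ($i\le c$, the $Z_i,X_i$ acting on Bob's $i$-th qubit) and $g'_j\otimes I$ ($j>c$). Its minimum distance is the minimum weight of an element of $\mathcal N(\mathcal S')\setminus\mathcal S_I$, where $\mathcal S_I=\langle g'_{c+1},\dots,g'_{n'-k-c}\rangle$.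 The subscript $AB$ indicates that the stabilizer group on all $n'+c$ qubits (Alice's and Bob's) is that of a standard $[[n'+c,k,d]]$ stabilizer code, so that errors on Bob's qubits are corrected as well as those on Alice's. *)

theory Defs
  imports Main
begin

text \<open>Pauli operators on n qubits up to phase: X^a Z^b encoded as the pair (a,b) of
 binary vectors; qubits are indexed 0..n-1, entries beyond n are required to be zero.\<close>

type_synonym pv = "(nat \<Rightarrow> bool) \<times> (nat \<Rightarrow> bool)"

definition pauli :: "nat \<Rightarrow> pv set" where
  "pauli n = {p. \<forall>j. n \<le> j \<longrightarrow> \<not> fst p j \<and> \<not> snd p j}"

definition pzero :: pv where
  "pzero = (\<lambda>_. False, \<lambda>_. False)"

text \<open>Product of Pauli operators (up to phase) = componentwise XOR.\<close>
definition padd :: "pv \<Rightarrow> pv \<Rightarrow> pv" where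
  "padd p q = (\<lambda>j. fst p j \<noteq> fst q j, \<lambda>j. snd p j \<noteq> snd q j)"

definition weight :: "nat \<Rightarrow> pv \<Rightarrow> nat" where
  "weight n p = card {j. j < n \<and> (fst p j \<or> snd p j)}"

text \<open>X^a Z^b and X^a' Z^b' commute iff a.b' + b.a' = 0 (mod 2).\<close>
definition commute :: "nat \<Rightarrow> pv \<Rightarrow> pv \<Rightarrow> bool" where
  "commute n p q = even (card {j. j < n \<and> ((fst p j \<and> snd q j) \<noteq> (snd p j \<and> fst q j))})"

definition psum :: "(nat \<Rightarrow> pv) \<Rightarrow> nat set \<Rightarrow> pv" where
  "psum r T = (\<lambda>j. odd (card {i\<in>T. fst (r i) j}), \<lambda>j. odd (card {i\<in>T. snd (r i) j}))"

definition rowspan :: "nat \<Rightarrow> (nat \<Rightarrow> pv) \<Rightarrow> pv set" where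
  "rowspan m r = {psum r T | T. T \<subseteq> {..<m}}"

definition indep :: "nat \<Rightarrow> (nat \<Rightarrow> pv) \<Rightarrow> bool" where
  "indep m r = (\<forall>T. T \<subseteq> {..<m} \<longrightarrow> T \<noteq> {} \<longrightarrow> psum r T \<noteq> pzero)"

definition normalizer :: "nat \<Rightarrow> pv set \<Rightarrow> pv set" where
  "normalizer n S = {p \<in> pauli n. \<forall>q\<in>S. commute n p q}"

definition stab_code :: "nat \<Rightarrow> nat \<Rightarrow> nat \<Rightarrow> (nat \<Rightarrow> pv) \<Rightarrow> bool" where
  "stab_code n k d r \<longleftrightarrow>
     k \<le> n \<and> (\<forall>i<n-k. r i \<in> pauli n) \<and> indep (n-k) r \<and>
     (\<forall>i<n-k. \<forall>j<n-k. commute n (r i) (r j)) \<and>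
     (\<exists>p \<in> normalizer n (rowspan (n-k) r) - rowspan (n-k) r. weight n p = d) \<and>
     (\<forall>p \<in> normalizer n (rowspan (n-k) r) - rowspan (n-k) r. d \<le> weight n p)"

definition nondegenerate :: "nat \<Rightarrow> nat \<Rightarrow> nat \<Rightarrow> (nat \<Rightarrow> pv) \<Rightarrow> bool" where
  "nondegenerate n k d r \<longleftrightarrow>
     (\<forall>p \<in> normalizer n (rowspan (n-k) r). p \<noteq> pzero \<longrightarrow> d \<le> weight n p)"

text \<open>Standard form with parameter s for an m-row check matrix on n qubits:
  rows 0..s-1 = [A I | D 0], rows s..2s-1 = [C 0 | B I], rows 2s..m-1 = [E 0 | F 0],
  the identity blocks occupying the last s columns (qubits n-s..n-1).\<close>
definition std_form :: "nat \<Rightarrow> nat \<Rightarrow> nat \<Rightarrow> (nat \<Rightarrow> pv) \<Rightarrow> bool" where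
  "std_form n m s r \<longleftrightarrow> 2*s \<le> m \<and> s \<le> n \<and>
     (\<forall>i<m. \<forall>j. n - s \<le> j \<and> j < n \<longrightarrow>
        (fst (r i) j \<longleftrightarrow> i < s \<and> j - (n - s) = i) \<and>
        (snd (r i) j \<longleftrightarrow> s \<le> i \<and> i < 2*s \<and> j - (n - s) = i - s))"

definition trunc :: "nat \<Rightarrow> pv \<Rightarrow> pv" where
  "trunc m p = (\<lambda>j. fst p j \<and> j < m, \<lambda>j. snd p j \<and> j < m)"

text \<open>Tensoring with X resp. Z on Bob's qubit, placed at position q.\<close>
definition with_X :: "nat \<Rightarrow> pv \<Rightarrow> pv" where
  "with_X q p = (\<lambda>j. fst p j \<or> j = q, snd p)"

definition with_Z :: "nat \<Rightarrow> pv \<Rightarrow> pv" where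
  "with_Z q p = (fst p, \<lambda>j. snd p j \<or> j = q)"

definition qperm :: "(nat \<Rightarrow> nat) \<Rightarrow> pv \<Rightarrow> pv" where
  "qperm \<sigma> p = (\<lambda>j. fst p (\<sigma> j), \<lambda>j. snd p (\<sigma> j))"

text \<open>R (rows 0..n'+c-k-1, on n' qubits) is the check matrix of the simplified stabilizer
 group of an [[n',k,d;c]]_AB EAQEC code. Generators g 0..g (n'-k-1), h 0..h (c-1)
 (0-based versions of g'_1.., h'_1..); Bob's i-th qubit is qubit n'+i of the n'+c-qubit system.\<close>
definition eaqec_AB :: "nat \<Rightarrow> nat \<Rightarrow> nat \<Rightarrow> nat \<Rightarrow> (nat \<Rightarrow> pv) \<Rightarrow> bool" where
  "eaqec_AB n' k d c R \<longleftrightarrow>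
    (\<exists>g h :: nat \<Rightarrow> pv.
      let m = n' + c - k;
          fam = (\<lambda>j. if j < c then h j else g (j - c));
          ext = (\<lambda>j. if j < c then with_X (n' + j) (h j)
                     else if j - c < c then with_Z (n' + (j - c)) (g (j - c))
                     else g (j - c));
          SI = rowspan (n' - k - c) (\<lambda>i. g (c + i))
      in k + c \<le> n' \<and>
         (\<forall>i<m. R i \<in> pauli n') \<and> indep m R \<and> rowspan m R = rowspan m fam \<and>
         (\<forall>i<n'-k. g i \<in> pauli n') \<and> (\<forall>i<c. h i \<in> pauli n') \<and>
         (\<forall>i<c. \<not> commute n' (g i) (h i)) \<and>
         (\<forall>i<n'-k. \<forall>j<n'-k. commute n' (g i) (g j)) \<and>
         (\<forall>i<c. \<forall>j<c. commute n' (h i) (h j)) \<and>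
         (\<forall>i<n'-k. \<forall>j<c. i \<noteq> j \<longrightarrow> commute n' (g i) (h j)) \<and>
         stab_code (n' + c) k d ext \<and>
         (\<forall>p \<in> normalizer n' (rowspan m fam) - SI. d \<le> weight n' p) \<and>
         (\<forall>e1 \<in> pauli (n' + c). \<forall>e2 \<in> pauli (n' + c).
            weight (n' + c) e1 \<le> (d - 1) div 2 \<longrightarrow> weight (n' + c) e2 \<le> (d - 1) div 2 \<longrightarrow>
            padd e1 e2 \<in> rowspan m ext \<or> padd e1 e2 \<notin> normalizer (n' + c) (rowspan m ext)))"

end

theory Submission
  imports Defs
begin

text \<open>Deleting the last c columns of a standard-form check matrix removes Bob's qubits. There the
  rows s-c..s-1 carry a single X, the rows 2s-c..2s-1 a single Z, and all other rows act trivially.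
  Hence the truncated rows pair up into anticommuting pairs (g'_i, h'_i) while all other pairs still
  commute, and re-attaching X resp. Z on Bob's qubits gives back the original rows: the extended
  stabilizer group is the original code, which yields its parameters and its error correction.
  An operator on Alice's qubits commuting with the truncated rows commutes with the original ones;
  if it is a stabilizer, it contains no row touching Bob's qubits, i.e. it lies in S_I. This gives
  the distance of the entanglement-assisted code.

  For a nondegenerate code no nonzero Pauli operator supported on fewer than d qubits commutes with
  the stabilizer. Since the symplectic form is nondegenerate, the stabilizer therefore restricts onto
  all Pauli operators on any d-1 qubits, say the last ones, and no reordering of qubits is needed.
  Preimages of the single-qubit X and Z operators there, completed to a basis by generators cleared
  on those qubits, form a check matrix in standard form with s = d-1; as these 2s rows are
  independent, s \<le> (n-k)/2.\<close>

lemma odd_card_filter_xor: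
  assumes "finite A"
  shows "odd (card {x\<in>A. P x \<noteq> Q x}) \<longleftrightarrow> (odd (card {x\<in>A. P x}) \<noteq> odd (card {x\<in>A. Q x}))"
  using assms
proof (induction A rule: finite_induct)
  case empty
  then show ?case by simp
next
  case (insert a A)
  have card_insert: "card {x\<in>insert a A. R x} = (if R a then Suc (card {x\<in>A. R x}) else card {x\<in>A. R x})"
    for R
  proof -
    have "{x\<in>insert a A. R x} = (if R a then insert a {x\<in>A. R x} else {x\<in>A. R x})" by auto
    then show ?thesis using insert by simp
  qed
  show ?case unfolding card_insert using insert.IH by auto
qed

section \<open>Pauli operators as binary vectors\<close>

lemma padd_pzero [simp]: "padd p pzero = p" "padd pzero p = p"
  unfolding padd_def pzero_def by (simp_all add: prod_eq_iff)

lemma padd_self [simp]: "padd p p = pzero"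
  unfolding padd_def pzero_def by (simp add: prod_eq_iff)

lemma padd_assoc: "padd (padd p q) u = padd p (padd q u)"
  unfolding padd_def by (auto simp add: prod_eq_iff)

lemma padd_cancel_right [simp]: "padd (padd p q) q = p"
  by (simp add: padd_assoc)

lemma psum_empty [simp]: "psum r {} = pzero"
  unfolding psum_def pzero_def by simp

lemma psum_singleton [simp]: "psum r {i} = r i"
proof -
  have "card {i'\<in>{i}. P i'} = (if P i then 1 else 0)" for P
  proof -
    have "{i'\<in>{i}. P i'} = (if P i then {i} else {})" by auto
    then show ?thesis by simp
  qed
  then show ?thesis unfolding psum_def by (simp add: prod_eq_iff)
qed

lemma odd_card_sym_diff_filter:
  assumes "finite A" "finite B"
  shows "odd (card {i \<in> sym_diff A B. F i}) \<longleftrightarrow> (odd (card {i\<in>A. F i}) \<noteq> odd (card {i\<in>B. F i}))"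
proof -
  have "odd (card {i\<in>A \<union> B. (i \<in> A \<and> F i) \<noteq> (i \<in> B \<and> F i)}) \<longleftrightarrow>
        (odd (card {i\<in>A \<union> B. i \<in> A \<and> F i}) \<noteq> odd (card {i\<in>A \<union> B. i \<in> B \<and> F i}))"
    using assms by (intro odd_card_filter_xor) auto
  moreover have "{i\<in>A \<union> B. (i \<in> A \<and> F i) \<noteq> (i \<in> B \<and> F i)} = {i \<in> sym_diff A B. F i}"
    "{i\<in>A \<union> B. i \<in> A \<and> F i} = {i\<in>A. F i}" "{i\<in>A \<union> B. i \<in> B \<and> F i} = {i\<in>B. F i}"
    by auto
  ultimately show ?thesis by simp
qed

lemma psum_sym_diff:
  assumes "finite A" "finite B"
  shows "psum r (sym_diff A B) = padd (psum r A) (psum r B)"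
  unfolding psum_def padd_def by (simp only: odd_card_sym_diff_filter[OF assms] fst_conv snd_conv)

lemma psum_insert:
  assumes "finite T" "i \<notin> T"
  shows "psum r (insert i T) = padd (psum r T) (r i)"
proof -
  have "T - {i} \<union> ({i} - T) = insert i T" using assms by auto
  then show ?thesis using psum_sym_diff[of T "{i}" r] assms by simp
qed

lemma psum_cong:
  assumes "\<And>i. i \<in> T \<Longrightarrow> r i = r' i"
  shows "psum r T = psum r' T"
proof -
  have "{i\<in>T. fst (r i) j} = {i\<in>T. fst (r' i) j}" "{i\<in>T. snd (r i) j} = {i\<in>T. snd (r' i) j}" for j
    using assms by auto
  then show ?thesis unfolding psum_def by simp
qed

lemma psum_reindex:
  assumes "inj_on f T"
  shows "psum (\<lambda>i. r (f i)) T = psum r (f ` T)"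
proof -
  have card_image_filter: "card {i\<in>f ` T. P i} = card {i\<in>T. P (f i)}" for P
  proof -
    have "f ` {i\<in>T. P (f i)} = {i\<in>f ` T. P i}" by auto
    moreover have "inj_on f {i\<in>T. P (f i)}" using assms by (rule inj_on_subset) auto
    ultimately show ?thesis using card_image by metis
  qed
  show ?thesis unfolding psum_def card_image_filter by simp
qed

definition pauli_subgroup :: "pv set \<Rightarrow> bool" where
  "pauli_subgroup W \<longleftrightarrow> pzero \<in> W \<and> (\<forall>p\<in>W. \<forall>q\<in>W. padd p q \<in> W)"

lemma psum_in_subgroup:
  assumes "pauli_subgroup W" "finite T" "\<forall>i\<in>T. r i \<in> W"
  shows "psum r T \<in> W"
  using assms(2,3)
proof (induction T rule: finite_induct)
  case empty
  then show ?case using assms(1) unfolding pauli_subgroup_def by simp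
next
  case (insert i T)
  then show ?case using assms(1) unfolding pauli_subgroup_def by (simp add: psum_insert)
qed

lemma psum_in_rowspan: "T \<subseteq> {..<m} \<Longrightarrow> psum r T \<in> rowspan m r"
  unfolding rowspan_def by blast

lemma pzero_in_rowspan: "pzero \<in> rowspan m r"
  using psum_in_rowspan[of "{}" m r] by simp

lemma gen_in_rowspan: "i < m \<Longrightarrow> r i \<in> rowspan m r"
  using psum_in_rowspan[of "{i}" m r] by simp

lemma rowspan_padd:
  assumes "p \<in> rowspan m r" "q \<in> rowspan m r"
  shows "padd p q \<in> rowspan m r"
proof -
  obtain A B where AB: "A \<subseteq> {..<m}" "B \<subseteq> {..<m}" and "p = psum r A" "q = psum r B"
    using assms unfolding rowspan_def by blast
  moreover have "finite A" "finite B" using AB finite_lessThan finite_subset by blast+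
  ultimately have "padd p q = psum r (sym_diff A B)" by (simp add: psum_sym_diff)
  moreover have "sym_diff A B \<subseteq> {..<m}" using AB by blast
  ultimately show ?thesis by (simp add: psum_in_rowspan)
qed

lemma pauli_subgroup_rowspan: "pauli_subgroup (rowspan m r)"
  unfolding pauli_subgroup_def using pzero_in_rowspan rowspan_padd by blast

lemma rowspan_least:
  assumes "pauli_subgroup W" "\<forall>i<m. r i \<in> W"
  shows "rowspan m r \<subseteq> W"
proof
  fix p assume "p \<in> rowspan m r"
  then obtain T where "T \<subseteq> {..<m}" "p = psum r T" unfolding rowspan_def by blast
  then show "p \<in> W"
    using psum_in_subgroup[OF assms(1), of T r] assms(2) finite_subset[of T "{..<m}"] by auto
qed

lemma rowspan_eq_image: "rowspan m r = psum r ` Pow {..<m}"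
  unfolding rowspan_def by auto

lemma rowspan_cong:
  assumes "\<And>i. i < m \<Longrightarrow> r i = r' i"
  shows "rowspan m r = rowspan m r'"
  unfolding rowspan_eq_image using assms by (intro image_cong psum_cong) auto

lemma indep_cong:
  assumes "\<And>i. i < m \<Longrightarrow> r i = r' i"
  shows "indep m r = indep m r'"
proof -
  have "psum r T = psum r' T" if "T \<subseteq> {..<m}" for T
    using that assms by (intro psum_cong) auto
  then show ?thesis unfolding indep_def by simp
qed

lemma psum_in_rowspan_reindex:
  assumes "inj_on f {..<m}" "T \<subseteq> f ` {..<m}"
  shows "psum r T \<in> rowspan m (\<lambda>i. r (f i))"
proof -
  define T' where "T' = {i\<in>{..<m}. f i \<in> T}"
  have "inj_on f T'" using assms(1) unfolding T'_def by (rule inj_on_subset) auto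
  then have "psum (\<lambda>i. r (f i)) T' = psum r (f ` T')" by (rule psum_reindex)
  moreover have "f ` T' = T" using assms(2) unfolding T'_def by auto
  moreover have "T' \<subseteq> {..<m}" unfolding T'_def by auto
  ultimately show ?thesis by (metis psum_in_rowspan)
qed

lemma rowspan_permute:
  assumes "bij_betw \<pi> {..<m} {..<m}"
  shows "rowspan m (\<lambda>i. r (\<pi> i)) = rowspan m r"
proof
  have "r (\<pi> i) \<in> rowspan m r" if "i < m" for i
    using assms that by (meson bij_betwE gen_in_rowspan lessThan_iff)
  then show "rowspan m (\<lambda>i. r (\<pi> i)) \<subseteq> rowspan m r"
    by (intro rowspan_least pauli_subgroup_rowspan) auto
  show "rowspan m r \<subseteq> rowspan m (\<lambda>i. r (\<pi> i))"
  proof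
    fix p assume "p \<in> rowspan m r"
    then obtain T where "T \<subseteq> {..<m}" "p = psum r T" unfolding rowspan_def by blast
    then show "p \<in> rowspan m (\<lambda>i. r (\<pi> i))"
      using assms psum_in_rowspan_reindex[of \<pi> m T r] unfolding bij_betw_def by simp
  qed
qed

lemma indep_permute:
  assumes "bij_betw \<pi> {..<m} {..<m}" "indep m r"
  shows "indep m (\<lambda>i. r (\<pi> i))"
  unfolding indep_def
proof (intro allI impI)
  fix T assume T: "T \<subseteq> {..<m}" "T \<noteq> {}"
  have "inj_on \<pi> T" using assms(1) T(1) bij_betw_imp_inj_on inj_on_subset by blast
  then have "psum (\<lambda>i. r (\<pi> i)) T = psum r (\<pi> ` T)" by (rule psum_reindex)
  moreover have "\<pi> ` T \<subseteq> {..<m}" "\<pi> ` T \<noteq> {}"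
    using assms(1) T bij_betw_imp_surj_on by blast+
  ultimately show "psum (\<lambda>i. r (\<pi> i)) T \<noteq> pzero" using assms(2) unfolding indep_def by simp
qed

lemma card_rowspan:
  assumes "indep m r"
  shows "card (rowspan m r) = 2 ^ m"
proof -
  have "inj_on (psum r) (Pow {..<m})"
  proof (rule inj_onI)
    fix A B assume A: "A \<in> Pow {..<m}" and B: "B \<in> Pow {..<m}" and eq: "psum r A = psum r B"
    have "finite A" "finite B" using A B finite_lessThan finite_subset by blast+
    then have "psum r (sym_diff A B) = pzero" using eq by (simp add: psum_sym_diff)
    moreover have "sym_diff A B \<subseteq> {..<m}" using A B by blast
    ultimately have "sym_diff A B = {}" using assms unfolding indep_def by blast
    then show "A = B" by blast
  qed
  then show ?thesis unfolding rowspan_eq_image by (simp add: card_image card_Pow)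
qed

section \<open>The symplectic form\<close>

definition anticommutes_on :: "nat set \<Rightarrow> pv \<Rightarrow> pv \<Rightarrow> bool" where
  "anticommutes_on A p q \<longleftrightarrow> odd (card {j\<in>A. (fst p j \<and> snd q j) \<noteq> (snd p j \<and> fst q j)})"

lemma commute_iff_not_anticommutes_on: "commute n p q \<longleftrightarrow> \<not> anticommutes_on {..<n} p q"
  unfolding commute_def anticommutes_on_def by (simp add: lessThan_def)

lemma anticommutes_on_sym: "anticommutes_on A p q \<longleftrightarrow> anticommutes_on A q p"
proof -
  have "{j\<in>A. (fst p j \<and> snd q j) \<noteq> (snd p j \<and> fst q j)} =
        {j\<in>A. (fst q j \<and> snd p j) \<noteq> (snd q j \<and> fst p j)}"
    by auto
  then show ?thesis unfolding anticommutes_on_def by simp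
qed

lemma anticommutes_on_padd_right:
  assumes "finite A"
  shows "anticommutes_on A p (padd q q') \<longleftrightarrow> (anticommutes_on A p q \<noteq> anticommutes_on A p q')"
proof -
  have "{j\<in>A. (fst p j \<and> snd (padd q q') j) \<noteq> (snd p j \<and> fst (padd q q') j)} =
        {j\<in>A. ((fst p j \<and> snd q j) \<noteq> (snd p j \<and> fst q j)) \<noteq> ((fst p j \<and> snd q' j) \<noteq> (snd p j \<and> fst q' j))}"
    unfolding padd_def by auto
  then show ?thesis unfolding anticommutes_on_def
    by (simp only: odd_card_filter_xor[OF assms])
qed

lemma anticommutes_on_cong:
  assumes "\<forall>j\<in>A. fst p j = fst p' j \<and> snd p j = snd p' j \<and> fst q j = fst q' j \<and> snd q j = snd q' j"
  shows "anticommutes_on A p q \<longleftrightarrow> anticommutes_on A p' q'"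
proof -
  have "{j\<in>A. (fst p j \<and> snd q j) \<noteq> (snd p j \<and> fst q j)} =
        {j\<in>A. (fst p' j \<and> snd q' j) \<noteq> (snd p' j \<and> fst q' j)}"
    using assms by auto
  then show ?thesis unfolding anticommutes_on_def by simp
qed

lemma anticommutes_on_vanishing:
  assumes "\<forall>j\<in>A. \<not> fst p j \<and> \<not> snd p j"
  shows "\<not> anticommutes_on A p q"
proof -
  have empty: "{j\<in>A. (fst p j \<and> snd q j) \<noteq> (snd p j \<and> fst q j)} = {}" using assms by auto
  show ?thesis unfolding anticommutes_on_def empty by simp
qed

lemma anticommutes_on_Un:
  assumes "finite A" "finite B" "A \<inter> B = {}"
  shows "anticommutes_on (A \<union> B) p q \<longleftrightarrow> (anticommutes_on A p q \<noteq> anticommutes_on B p q)"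
proof -
  let ?P = "\<lambda>j. (fst p j \<and> snd q j) \<noteq> (snd p j \<and> fst q j)"
  have "{j\<in>A \<union> B. ?P j} = {j\<in>A. ?P j} \<union> {j\<in>B. ?P j}" by auto
  moreover have "card ({j\<in>A. ?P j} \<union> {j\<in>B. ?P j}) = card {j\<in>A. ?P j} + card {j\<in>B. ?P j}"
    using assms by (intro card_Un_disjoint) auto
  ultimately show ?thesis unfolding anticommutes_on_def by simp
qed

lemma not_anticommutes_on_rowspan:
  assumes "finite A" "\<forall>i<m. \<not> anticommutes_on A p (r i)" "q \<in> rowspan m r"
  shows "\<not> anticommutes_on A p q"
proof -
  have "pauli_subgroup {q. \<not> anticommutes_on A p q}"
    unfolding pauli_subgroup_def
    using anticommutes_on_padd_right[OF assms(1)] anticommutes_on_vanishing[of A pzero]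
      anticommutes_on_sym
    by (auto simp: pzero_def)
  then have "rowspan m r \<subseteq> {q. \<not> anticommutes_on A p q}"
    using assms(2) by (intro rowspan_least) auto
  then show ?thesis using assms(3) by auto
qed

lemma normalizer_rowspan:
  "normalizer n (rowspan m r) = {p \<in> pauli n. \<forall>i<m. commute n p (r i)}"
  unfolding normalizer_def commute_iff_not_anticommutes_on
  using not_anticommutes_on_rowspan[of "{..<n}"] gen_in_rowspan by blast

definition Xq :: "nat \<Rightarrow> pv" where
  "Xq x = (\<lambda>j. j = x, \<lambda>_. False)"

definition Zq :: "nat \<Rightarrow> pv" where
  "Zq x = (\<lambda>_. False, \<lambda>j. j = x)"

lemma anticommutes_on_Xq:
  assumes "x \<in> A"
  shows "anticommutes_on A p (Xq x) \<longleftrightarrow> snd p x"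
proof -
  have "{j\<in>A. (fst p j \<and> snd (Xq x) j) \<noteq> (snd p j \<and> fst (Xq x) j)} = (if snd p x then {x} else {})"
    using assms unfolding Xq_def by auto
  then show ?thesis unfolding anticommutes_on_def by simp
qed

lemma anticommutes_on_Zq:
  assumes "x \<in> A"
  shows "anticommutes_on A p (Zq x) \<longleftrightarrow> fst p x"
proof -
  have "{j\<in>A. (fst p j \<and> snd (Zq x) j) \<noteq> (snd p j \<and> fst (Zq x) j)} = (if fst p x then {x} else {})"
    using assms unfolding Zq_def by auto
  then show ?thesis unfolding anticommutes_on_def by simp
qed

section \<open>Weights and stabilizer codes\<close>

lemma pauli_mono: "p \<in> pauli a \<Longrightarrow> a \<le> b \<Longrightarrow> p \<in> pauli b"
  unfolding pauli_def by auto

lemma rowspan_subset_pauli: "\<forall>i<m. r i \<in> pauli n \<Longrightarrow> rowspan m r \<subseteq> pauli n"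
  by (rule rowspan_least) (auto simp: pauli_subgroup_def pauli_def pzero_def padd_def)

lemma trunc_in_pauli: "trunc a p \<in> pauli a"
  unfolding trunc_def pauli_def by auto

lemma psum_trunc: "psum (\<lambda>i. trunc a (r i)) T = trunc a (psum r T)"
proof -
  have "{i\<in>T. fst (r i) j \<and> j < a} = (if j < a then {i\<in>T. fst (r i) j} else {})"
       "{i\<in>T. snd (r i) j \<and> j < a} = (if j < a then {i\<in>T. snd (r i) j} else {})" for j
    by auto
  then show ?thesis unfolding psum_def trunc_def by (auto simp: prod_eq_iff)
qed

lemma weight_padd_le: "weight n (padd p q) \<le> weight n p + weight n q"
proof -
  have "{j. j < n \<and> (fst (padd p q) j \<or> snd (padd p q) j)} \<subseteq>
        {j. j < n \<and> (fst p j \<or> snd p j)} \<union> {j. j < n \<and> (fst q j \<or> snd q j)}"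
    unfolding padd_def by auto
  then have "weight n (padd p q) \<le> card ({j. j < n \<and> (fst p j \<or> snd p j)} \<union> {j. j < n \<and> (fst q j \<or> snd q j)})"
    unfolding weight_def by (intro card_mono) auto
  also have "\<dots> \<le> weight n p + weight n q" unfolding weight_def by (rule card_Un_le)
  finally show ?thesis .
qed

lemma pauli_eq_pzeroI:
  assumes "p \<in> pauli n" "\<And>j. j < n \<Longrightarrow> \<not> fst p j \<and> \<not> snd p j"
  shows "p = pzero"
proof -
  have "\<not> fst p j \<and> \<not> snd p j" for j
    using assms unfolding pauli_def by (cases "j < n") auto
  then show ?thesis unfolding pzero_def by (simp add: prod_eq_iff fun_eq_iff)
qed

lemma weight_eq_0:
  assumes "p \<in> pauli n" "weight n p = 0"
  shows "p = pzero"
  using assms(2) unfolding weight_def by (intro pauli_eq_pzeroI[OF assms(1)]) simp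

lemma weight_le: "weight n p \<le> n"
proof -
  have "weight n p \<le> card {..<n}" unfolding weight_def by (intro card_mono) auto
  then show ?thesis by simp
qed

lemma weight_pauli_mono:
  assumes "p \<in> pauli a" "a \<le> b"
  shows "weight b p = weight a p"
proof -
  have "{j. j < b \<and> (fst p j \<or> snd p j)} = {j. j < a \<and> (fst p j \<or> snd p j)}"
    using assms unfolding pauli_def by (auto simp: not_le[symmetric])
  then show ?thesis unfolding weight_def by simp
qed

lemma stab_code_distance:
  assumes "stab_code n k d r" "p \<in> normalizer n (rowspan (n-k) r)" "p \<notin> rowspan (n-k) r"
  shows "d \<le> weight n p"
  using assms unfolding stab_code_def by simp

lemma stab_code_distance_pos:
  assumes "stab_code n k d r"
  shows "0 < d"
proof (rule ccontr)
  assume "\<not> 0 < d"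
  obtain p where p: "p \<in> normalizer n (rowspan (n-k) r)" "p \<notin> rowspan (n-k) r" "weight n p = d"
    using assms unfolding stab_code_def by blast
  then have "p \<in> pauli n" unfolding normalizer_def by simp
  then have "p = pzero" using weight_eq_0 p(3) \<open>\<not> 0 < d\<close> by simp
  then show False using p(2) pzero_in_rowspan by simp
qed

lemma stab_code_distance_le:
  assumes "stab_code n k d r"
  shows "d \<le> n"
  using assms weight_le unfolding stab_code_def by metis

lemma stab_code_corrects:
  assumes "stab_code n k d r" "weight n e1 \<le> (d - 1) div 2" "weight n e2 \<le> (d - 1) div 2"
  shows "padd e1 e2 \<in> rowspan (n-k) r \<or> padd e1 e2 \<notin> normalizer n (rowspan (n-k) r)"
proof (rule ccontr)
  assume "\<not> ?thesis"
  then have "d \<le> weight n (padd e1 e2)" using stab_code_distance[OF assms(1)] by simp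
  moreover have "weight n (padd e1 e2) \<le> weight n e1 + weight n e2" by (rule weight_padd_le)
  moreover have "0 < d" using stab_code_distance_pos[OF assms(1)] .
  ultimately show False using assms(2,3) by linarith
qed

lemma stab_code_permute_rows:
  assumes "stab_code n k d r" "bij_betw \<pi> {..<n-k} {..<n-k}"
    and "\<And>i. i < n - k \<Longrightarrow> r' i = r (\<pi> i)"
  shows "stab_code n k d r'"
proof -
  have "rowspan (n-k) r' = rowspan (n-k) r"
    using rowspan_cong[of "n-k" r'] assms(3) rowspan_permute[OF assms(2)] by simp
  moreover have "indep (n-k) r'"
    using indep_cong[of "n-k" r'] assms(3) indep_permute[OF assms(2)] assms(1)
    unfolding stab_code_def by simp
  moreover have "\<pi> i < n-k" if "i < n-k" for i using assms(2) that bij_betwE by blast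
  ultimately show ?thesis using assms(1,3) unfolding stab_code_def by simp
qed

section \<open>Truncating a check matrix in standard form\<close>

locale std_form_code =
  fixes n k d :: nat and r :: "nat \<Rightarrow> pv" and s c :: nat
  assumes code: "stab_code n k d r" and std: "std_form n (n-k) s r" and c_le_s: "c \<le> s"
begin

lemma row_pauli: "i < n-k \<Longrightarrow> r i \<in> pauli n"
  using code unfolding stab_code_def by simp

lemma rows_commute: "i < n-k \<Longrightarrow> j < n-k \<Longrightarrow> commute n (r i) (r j)"
  using code unfolding stab_code_def by simp

lemma two_s_le: "2*s \<le> n-k" and s_le_n: "s \<le> n"
  using std unfolding std_form_def by simp_all

lemma c_le_n: "c \<le> n"
  using c_le_s s_le_n by simp

lemma fst_row_Bob:
  assumes "i < n-k" "n-c \<le> x"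
  shows "fst (r i) x \<longleftrightarrow> x < n \<and> i = s-c+(x-(n-c))"
proof (cases "x < n")
  case True
  then have "fst (r i) x \<longleftrightarrow> i < s \<and> x - (n-s) = i"
    using std assms c_le_s unfolding std_form_def by auto
  then show ?thesis using True assms(2) c_le_s s_le_n by auto
next
  case False
  then show ?thesis using row_pauli[OF assms(1)] unfolding pauli_def by simp
qed

lemma snd_row_Bob:
  assumes "i < n-k" "n-c \<le> x"
  shows "snd (r i) x \<longleftrightarrow> x < n \<and> i = 2*s-c+(x-(n-c))"
proof (cases "x < n")
  case True
  then have "snd (r i) x \<longleftrightarrow> s \<le> i \<and> i < 2*s \<and> x - (n-s) = i - s"
    using std assms c_le_s unfolding std_form_def by auto
  then show ?thesis using True assms(2) c_le_s s_le_n by auto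
next
  case False
  then show ?thesis using row_pauli[OF assms(1)] unfolding pauli_def by simp
qed

definition Bob_row :: "nat \<Rightarrow> bool" where
  "Bob_row i \<longleftrightarrow> (s-c \<le> i \<and> i < s) \<or> (2*s-c \<le> i \<and> i < 2*s)"

abbreviation R :: "nat \<Rightarrow> pv" where
  "R i \<equiv> trunc (n-c) (r i)"

lemma non_Bob_row_vanishes:
  assumes "i < n-k" "\<not> Bob_row i" "n-c \<le> x"
  shows "\<not> fst (r i) x \<and> \<not> snd (r i) x"
proof -
  have "x < n \<Longrightarrow> x - (n-c) < c" using assms(3) c_le_n by linarith
  then have "\<not> (x < n \<and> i = s-c+(x-(n-c)))" "\<not> (x < n \<and> i = 2*s-c+(x-(n-c)))"
    using assms(2) c_le_s unfolding Bob_row_def by auto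
  then show ?thesis using fst_row_Bob[OF assms(1,3)] snd_row_Bob[OF assms(1,3)] by blast
qed

lemma trunc_row_non_Bob:
  assumes "i < n-k" "\<not> Bob_row i"
  shows "R i = r i"
  using non_Bob_row_vanishes[OF assms] unfolding trunc_def
  by (auto simp: prod_eq_iff fun_eq_iff) (meson not_le)+

lemma X_row_lt: "t < c \<Longrightarrow> s-c+t < n-k" and Z_row_lt: "t < c \<Longrightarrow> 2*s-c+t < n-k"
  using two_s_le c_le_s by auto

lemma X_row_Bob:
  assumes "t < c" "n-c \<le> x"
  shows "fst (r (s-c+t)) x \<longleftrightarrow> x = n-c+t" "\<not> snd (r (s-c+t)) x"
proof -
  have "x < n \<and> s-c+t = s-c+(x-(n-c)) \<longleftrightarrow> x = n-c+t" using assms c_le_n by auto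
  then show "fst (r (s-c+t)) x \<longleftrightarrow> x = n-c+t"
    using fst_row_Bob[OF X_row_lt[OF assms(1)] assms(2)] by simp
  have Bob_offset: "x < n \<Longrightarrow> x - (n-c) < c" using assms(2) c_le_n by linarith
  show "\<not> snd (r (s-c+t)) x"
    using snd_row_Bob[OF X_row_lt[OF assms(1)] assms(2)] assms(1) c_le_s Bob_offset by auto
qed

lemma Z_row_Bob:
  assumes "t < c" "n-c \<le> x"
  shows "\<not> fst (r (2*s-c+t)) x" "snd (r (2*s-c+t)) x \<longleftrightarrow> x = n-c+t"
proof -
  have "x < n \<and> 2*s-c+t = 2*s-c+(x-(n-c)) \<longleftrightarrow> x = n-c+t" using assms c_le_n by auto
  then show "snd (r (2*s-c+t)) x \<longleftrightarrow> x = n-c+t"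
    using snd_row_Bob[OF Z_row_lt[OF assms(1)] assms(2)] by simp
  have Bob_offset: "x < n \<Longrightarrow> x - (n-c) < c" using assms(2) c_le_n by linarith
  show "\<not> fst (r (2*s-c+t)) x"
    using fst_row_Bob[OF Z_row_lt[OF assms(1)] assms(2)] assms(1) c_le_s Bob_offset by auto
qed

lemma with_X_trunc_row:
  assumes "t < c"
  shows "with_X (n-c+t) (R (s-c+t)) = r (s-c+t)"
proof -
  have "(fst (r (s-c+t)) x \<and> x < n-c) \<or> x = n-c+t \<longleftrightarrow> fst (r (s-c+t)) x"
       "snd (r (s-c+t)) x \<and> x < n-c \<longleftrightarrow> snd (r (s-c+t)) x" for x
    using X_row_Bob[OF assms, of x] by (cases "x < n-c"; auto)+
  then show ?thesis unfolding with_X_def trunc_def by (simp add: prod_eq_iff fun_eq_iff)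
qed

lemma with_Z_trunc_row:
  assumes "t < c"
  shows "with_Z (n-c+t) (R (2*s-c+t)) = r (2*s-c+t)"
proof -
  have "fst (r (2*s-c+t)) x \<and> x < n-c \<longleftrightarrow> fst (r (2*s-c+t)) x"
       "(snd (r (2*s-c+t)) x \<and> x < n-c) \<or> x = n-c+t \<longleftrightarrow> snd (r (2*s-c+t)) x" for x
    using Z_row_Bob[OF assms, of x] by (cases "x < n-c"; auto)+
  then show ?thesis unfolding with_Z_def trunc_def by (simp add: prod_eq_iff fun_eq_iff)
qed

lemma anticommutes_on_Bob_X_row:
  assumes "t < c"
  shows "anticommutes_on {n-c..<n} p (r (s-c+t)) \<longleftrightarrow> snd p (n-c+t)"
proof -
  have "anticommutes_on {n-c..<n} p (r (s-c+t)) \<longleftrightarrow> anticommutes_on {n-c..<n} p (Xq (n-c+t))"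
    using X_row_Bob[OF assms] unfolding Xq_def by (intro anticommutes_on_cong) simp
  also have "\<dots> \<longleftrightarrow> snd p (n-c+t)" using assms c_le_n by (intro anticommutes_on_Xq) auto
  finally show ?thesis .
qed

lemma anticommutes_on_Bob_Z_row:
  assumes "t < c"
  shows "anticommutes_on {n-c..<n} p (r (2*s-c+t)) \<longleftrightarrow> fst p (n-c+t)"
proof -
  have "anticommutes_on {n-c..<n} p (r (2*s-c+t)) \<longleftrightarrow> anticommutes_on {n-c..<n} p (Zq (n-c+t))"
    using Z_row_Bob[OF assms] unfolding Zq_def by (intro anticommutes_on_cong) simp
  also have "\<dots> \<longleftrightarrow> fst p (n-c+t)" using assms c_le_n by (intro anticommutes_on_Zq) auto
  finally show ?thesis .
qed

lemma not_anticommutes_on_Bob_non_Bob_row: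
  assumes "i < n-k" "\<not> Bob_row i"
  shows "\<not> anticommutes_on {n-c..<n} p (r i)"
proof -
  have "\<not> anticommutes_on {n-c..<n} (r i) p"
    using non_Bob_row_vanishes[OF assms] by (intro anticommutes_on_vanishing) simp
  then show ?thesis by (simp add: anticommutes_on_sym)
qed

lemma anticommutes_on_split:
  "anticommutes_on {..<n} p q \<longleftrightarrow> (anticommutes_on {..<n-c} p q \<noteq> anticommutes_on {n-c..<n} p q)"
proof -
  have "{..<n} = {..<n-c} \<union> {n-c..<n}" using c_le_n by auto
  moreover have "{..<n-c} \<inter> {n-c..<n} = {}" by auto
  ultimately show ?thesis using anticommutes_on_Un[of "{..<n-c}" "{n-c..<n}" p q] by simp
qed

lemma commute_trunc_rows:
  assumes "a < n-k" "b < n-k"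
  shows "commute (n-c) (R a) (R b) \<longleftrightarrow> \<not> anticommutes_on {n-c..<n} (r a) (r b)"
proof -
  have "anticommutes_on {..<n-c} (R a) (R b) \<longleftrightarrow> anticommutes_on {..<n-c} (r a) (r b)"
    unfolding trunc_def by (rule anticommutes_on_cong) simp
  then show ?thesis
    using rows_commute[OF assms] anticommutes_on_split
    unfolding commute_iff_not_anticommutes_on by simp
qed

lemma commute_trunc_X_row:
  assumes "a < n-k" "t < c"
  shows "commute (n-c) (R a) (R (s-c+t)) \<longleftrightarrow> a \<noteq> 2*s-c+t"
proof -
  have "snd (r a) (n-c+t) \<longleftrightarrow> a = 2*s-c+t"
    using snd_row_Bob[OF assms(1), of "n-c+t"] assms(2) c_le_n by auto
  then show ?thesis
    using commute_trunc_rows[OF assms(1) X_row_lt[OF assms(2)]] anticommutes_on_Bob_X_row[OF assms(2)] by simp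
qed

lemma commute_trunc_Z_row:
  assumes "a < n-k" "t < c"
  shows "commute (n-c) (R a) (R (2*s-c+t)) \<longleftrightarrow> a \<noteq> s-c+t"
proof -
  have "fst (r a) (n-c+t) \<longleftrightarrow> a = s-c+t"
    using fst_row_Bob[OF assms(1), of "n-c+t"] assms(2) c_le_n by auto
  then show ?thesis
    using commute_trunc_rows[OF assms(1) Z_row_lt[OF assms(2)]] anticommutes_on_Bob_Z_row[OF assms(2)] by simp
qed

lemma commute_trunc_non_Bob_row:
  assumes "a < n-k" "b < n-k" "\<not> Bob_row b"
  shows "commute (n-c) (R a) (R b)"
  using commute_trunc_rows[OF assms(1,2)] not_anticommutes_on_Bob_non_Bob_row[OF assms(2,3)] by simp

lemma row_not_anticommutes_on_rowspan:
  assumes "i < n-k" "q \<in> rowspan (n-k) r"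
  shows "\<not> anticommutes_on {..<n} q (r i)"
proof -
  have "\<not> anticommutes_on {..<n} (r i) q"
    using rows_commute[OF assms(1)] assms(2)
    by (intro not_anticommutes_on_rowspan) (auto simp: commute_iff_not_anticommutes_on)
  then show ?thesis by (simp add: anticommutes_on_sym)
qed

lemma Bob_supported_stabilizer_trivial:
  assumes "p \<in> rowspan (n-k) r" "\<forall>j<n-c. \<not> fst p j \<and> \<not> snd p j"
  shows "p = pzero"
proof -
  have "\<not> anticommutes_on {n-c..<n} p (r i)" if "i < n-k" for i
  proof -
    have "\<not> anticommutes_on {..<n-c} p (r i)" using assms(2) by (intro anticommutes_on_vanishing) simp
    then show ?thesis
      using row_not_anticommutes_on_rowspan[OF that assms(1)] anticommutes_on_split by simp
  qed
  then have Bob: "\<not> fst p (n-c+t) \<and> \<not> snd p (n-c+t)" if "t < c" for t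
    using anticommutes_on_Bob_X_row[OF that] anticommutes_on_Bob_Z_row[OF that]
      X_row_lt[OF that] Z_row_lt[OF that] by blast
  have "p \<in> pauli n"
    using assms(1) rowspan_subset_pauli[of "n-k" r n] row_pauli by blast
  moreover have "\<not> fst p j \<and> \<not> snd p j" if "j < n" for j
  proof (cases "j < n-c")
    case True
    then show ?thesis using assms(2) by simp
  next
    case False
    then have "j = n-c+(j-(n-c))" "j-(n-c) < c" using that by auto
    then show ?thesis using Bob by metis
  qed
  ultimately show ?thesis by (rule pauli_eq_pzeroI)
qed

lemma indep_trunc_rows: "indep (n-k) R"
  unfolding indep_def
proof (intro allI impI notI)
  fix T assume T: "T \<subseteq> {..<n-k}" "T \<noteq> {}" and zero: "psum R T = pzero"
  have "trunc (n-c) (psum r T) = pzero" using zero by (simp add: psum_trunc)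
  then have "\<forall>j<n-c. \<not> fst (psum r T) j \<and> \<not> snd (psum r T) j"
    unfolding trunc_def pzero_def by (auto simp: prod_eq_iff fun_eq_iff)
  then have "psum r T = pzero"
    using psum_in_rowspan[OF T(1)] by (intro Bob_supported_stabilizer_trivial) simp_all
  then show False using code T unfolding stab_code_def indep_def by blast
qed

lemma psum_rows_Bob:
  assumes "T \<subseteq> {..<n-k}" "t < c"
  shows "fst (psum r T) (n-c+t) \<longleftrightarrow> s-c+t \<in> T" "snd (psum r T) (n-c+t) \<longleftrightarrow> 2*s-c+t \<in> T"
proof -
  have "{i\<in>T. fst (r i) (n-c+t)} = (if s-c+t \<in> T then {s-c+t} else {})"
       "{i\<in>T. snd (r i) (n-c+t)} = (if 2*s-c+t \<in> T then {2*s-c+t} else {})"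
    using fst_row_Bob[of _ "n-c+t"] snd_row_Bob[of _ "n-c+t"] assms c_le_n by auto
  then show "fst (psum r T) (n-c+t) \<longleftrightarrow> s-c+t \<in> T" "snd (psum r T) (n-c+t) \<longleftrightarrow> 2*s-c+t \<in> T"
    unfolding psum_def by simp_all
qed

lemma commute_rows_of_commute_trunc_rows:
  assumes "p \<in> pauli (n-c)" "i < n-k" "commute (n-c) p (R i)"
  shows "commute n p (r i)"
proof -
  have "anticommutes_on {..<n-c} p (R i) \<longleftrightarrow> anticommutes_on {..<n-c} p (r i)"
    unfolding trunc_def by (rule anticommutes_on_cong) simp
  moreover have "\<not> anticommutes_on {n-c..<n} p (r i)"
    using assms(1) unfolding pauli_def by (intro anticommutes_on_vanishing) simp
  ultimately show ?thesis
    using assms(3) anticommutes_on_split unfolding commute_iff_not_anticommutes_on by simp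
qed

text \<open>Bob's X-rows s-c..s-1 become h'_1..h'_c, his Z-rows 2s-c..2s-1 become g'_1..g'_c, and the
  remaining rows become g'_(c+1), ... in their original order.\<close>

definition ea_index :: "nat \<Rightarrow> nat" where
  "ea_index j = (if j < c then s-c+j else if j < 2*c then 2*s-2*c+j
                 else if j < s+c then j - 2*c else if j < 2*s then j - c else j)"

lemma ea_index_bij: "bij_betw ea_index {..<n-k} {..<n-k}"
proof -
  have "ea_index ` {..<n-k} \<subseteq> {..<n-k}" using two_s_le c_le_s unfolding ea_index_def by auto
  moreover have "inj_on ea_index {..<n-k}"
    unfolding inj_on_def ea_index_def using c_le_s by (auto split: if_splits)
  ultimately show ?thesis unfolding bij_betw_def using endo_inj_surj by blast
qed

lemma ea_index_lt: "j < n-k \<Longrightarrow> ea_index j < n-k"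
  using ea_index_bij bij_betwE by blast

lemma ea_index_X: "j < c \<Longrightarrow> ea_index j = s-c+j"
  unfolding ea_index_def by simp

lemma ea_index_Z: "j < c \<Longrightarrow> ea_index (c+j) = 2*s-c+j"
  unfolding ea_index_def using c_le_s by auto

lemma ea_index_non_Bob: "2*c \<le> j \<Longrightarrow> \<not> Bob_row (ea_index j)"
  unfolding ea_index_def Bob_row_def using c_le_s by auto

lemma non_Bob_rows_ea_index:
  assumes "i < n-k" "\<not> Bob_row i"
  shows "i \<in> (\<lambda>j. ea_index (2*c+j)) ` {..<n-k-2*c}"
proof -
  have "i \<in> ea_index ` {..<n-k}" using assms(1) ea_index_bij unfolding bij_betw_def by simp
  then obtain j where j: "j < n-k" "ea_index j = i" by auto
  have "2*c \<le> j"
  proof (rule ccontr)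
    assume "\<not> 2*c \<le> j"
    then have "Bob_row (ea_index j)" unfolding ea_index_def Bob_row_def using c_le_s by auto
    then show False using assms(2) j(2) by simp
  qed
  then show ?thesis using j by (auto intro!: image_eqI[of _ _ "j - 2*c"])
qed

lemma Bob_row_X: "t < c \<Longrightarrow> Bob_row (s-c+t)" and Bob_row_Z: "t < c \<Longrightarrow> Bob_row (2*s-c+t)"
  unfolding Bob_row_def using c_le_s by auto

lemma Bob_rowE:
  assumes "Bob_row i"
  obtains t where "t < c" "i = s-c+t" | t where "t < c" "i = 2*s-c+t"
proof (cases "i < s")
  case True
  then have "i - (s-c) < c" "i = s-c+(i-(s-c))" using assms c_le_s unfolding Bob_row_def by auto
  then show ?thesis using that(1) by blast
next
  case False
  then have "i - (2*s-c) < c" "i = 2*s-c+(i-(2*s-c))" using assms c_le_s unfolding Bob_row_def by auto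
  then show ?thesis using that(2) by blast
qed

definition ea_g :: "nat \<Rightarrow> pv" where
  "ea_g i = R (ea_index (c+i))"

definition ea_h :: "nat \<Rightarrow> pv" where
  "ea_h j = R (s-c+j)"

lemma ea_g_index_lt: "i < n-c-k \<Longrightarrow> ea_index (c+i) < n-k"
  by (rule ea_index_lt) simp

lemma ea_g_not_X_row:
  assumes "i < n-c-k" "t < c"
  shows "ea_index (c+i) \<noteq> s-c+t"
proof (cases "i < c")
  case True
  then show ?thesis using ea_index_Z assms(2) c_le_s by simp
next
  case False
  then show ?thesis using ea_index_non_Bob[of "c+i"] Bob_row_X[OF assms(2)] by auto
qed

lemma ea_g_h_anticommute: "i < c \<Longrightarrow> \<not> commute (n-c) (ea_g i) (ea_h i)"
  unfolding ea_g_def ea_h_def using commute_trunc_X_row[OF Z_row_lt] ea_index_Z by simp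

lemma ea_g_commute:
  assumes "i < n-c-k" "j < n-c-k"
  shows "commute (n-c) (ea_g i) (ea_g j)"
proof (cases "j < c")
  case True
  then show ?thesis
    unfolding ea_g_def using commute_trunc_Z_row[OF ea_g_index_lt[OF assms(1)] True]
      ea_g_not_X_row[OF assms(1) True] ea_index_Z[OF True] by simp
next
  case False
  then show ?thesis
    unfolding ea_g_def using assms ea_g_index_lt ea_index_non_Bob[of "c+j"]
    by (intro commute_trunc_non_Bob_row) auto
qed

lemma ea_h_commute: "i < c \<Longrightarrow> j < c \<Longrightarrow> commute (n-c) (ea_h i) (ea_h j)"
  unfolding ea_h_def using commute_trunc_X_row[OF X_row_lt] c_le_s by simp

lemma ea_g_h_commute:
  assumes "i < n-c-k" "j < c" "i \<noteq> j"
  shows "commute (n-c) (ea_g i) (ea_h j)"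
proof -
  have "ea_index (c+i) \<noteq> 2*s-c+j"
  proof (cases "i < c")
    case True
    then show ?thesis using ea_index_Z assms(2,3) by simp
  next
    case False
    then show ?thesis using ea_index_non_Bob[of "c+i"] Bob_row_Z[OF assms(2)] by auto
  qed
  then show ?thesis
    unfolding ea_g_def ea_h_def using commute_trunc_X_row[OF ea_g_index_lt[OF assms(1)] assms(2)] by simp
qed

lemma ea_generators_eq: "j < n-k \<Longrightarrow> (if j < c then ea_h j else ea_g (j-c)) = R (ea_index j)"
  unfolding ea_g_def ea_h_def using ea_index_X by simp

lemma ea_extended_generators_eq:
  assumes "j < n-k"
  shows "(if j < c then with_X (n-c+j) (ea_h j)
          else if j - c < c then with_Z (n-c+(j-c)) (ea_g (j-c)) else ea_g (j-c)) = r (ea_index j)"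
proof -
  consider "j < c" | "c \<le> j" "j - c < c" | "2*c \<le> j" by linarith
  then show ?thesis
  proof cases
    case 1
    then show ?thesis unfolding ea_h_def using with_X_trunc_row ea_index_X by simp
  next
    case 2
    then obtain t where "j = c+t" "t < c" by (metis add_diff_inverse_nat less_diff_conv2 not_less)
    then show ?thesis unfolding ea_g_def using with_Z_trunc_row ea_index_Z by simp
  next
    case 3
    then have "\<not> j < c" "\<not> j - c < c" "c + (j-c) = j" by auto
    moreover have "R (ea_index j) = r (ea_index j)"
      using 3 trunc_row_non_Bob ea_index_lt[OF assms] ea_index_non_Bob by simp
    ultimately show ?thesis unfolding ea_g_def by (simp only: if_False)
  qed
qed

lemma Alice_stabilizer_in_SI:
  assumes "p \<in> rowspan (n-k) r" "p \<in> pauli (n-c)"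
  shows "p \<in> rowspan (n-c-k-c) (\<lambda>i. ea_g (c+i))"
proof -
  obtain T where T: "T \<subseteq> {..<n-k}" "p = psum r T" using assms(1) unfolding rowspan_def by blast
  have Bob: "\<not> fst p (n-c+t) \<and> \<not> snd p (n-c+t)" for t
    using assms(2) unfolding pauli_def by simp
  have non_Bob: "\<not> Bob_row i" if "i \<in> T" for i
  proof
    assume "Bob_row i"
    then show False using psum_rows_Bob[OF T(1)] T(2) Bob that by (elim Bob_rowE) auto
  qed
  then have "T \<subseteq> (\<lambda>j. ea_index (2*c+j)) ` {..<n-k-2*c}"
    using T(1) non_Bob_rows_ea_index by blast
  moreover have "inj_on (\<lambda>j. ea_index (2*c+j)) {..<n-k-2*c}"
  proof (rule inj_onI)
    fix x y assume "x \<in> {..<n-k-2*c}" "y \<in> {..<n-k-2*c}" "ea_index (2*c+x) = ea_index (2*c+y)"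
    moreover have "inj_on ea_index {..<n-k}" using ea_index_bij bij_betw_def by blast
    ultimately have "2*c+x = 2*c+y" by (auto dest: inj_onD)
    then show "x = y" by simp
  qed
  ultimately have "psum R T \<in> rowspan (n-k-2*c) (\<lambda>j. R (ea_index (2*c+j)))"
    by (intro psum_in_rowspan_reindex)
  moreover have "psum R T = p"
    unfolding T(2) using T(1) trunc_row_non_Bob non_Bob by (intro psum_cong) blast
  moreover have "rowspan (n-k-2*c) (\<lambda>j. R (ea_index (2*c+j))) = rowspan (n-c-k-c) (\<lambda>i. ea_g (c+i))"
    unfolding ea_g_def by (simp add: mult_2 add.assoc add.left_commute)
  ultimately show ?thesis by simp
qed

lemma ea_distance:
  assumes "p \<in> normalizer (n-c) (rowspan (n-k) R)" "p \<notin> rowspan (n-c-k-c) (\<lambda>i. ea_g (c+i))"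
  shows "d \<le> weight (n-c) p"
proof -
  have p: "p \<in> pauli (n-c)" "\<forall>i<n-k. commute (n-c) p (R i)"
    using assms(1) unfolding normalizer_rowspan by auto
  have "commute n p (r i)" if "i < n-k" for i
    using commute_rows_of_commute_trunc_rows[OF p(1) that] p(2) that by blast
  moreover have "p \<in> pauli n" using pauli_mono[OF p(1)] by simp
  ultimately have "p \<in> normalizer n (rowspan (n-k) r)"
    unfolding normalizer_rowspan by blast
  moreover have "p \<notin> rowspan (n-k) r" using Alice_stabilizer_in_SI p(1) assms(2) by blast
  ultimately have "d \<le> weight n p" by (rule stab_code_distance[OF code])
  then show ?thesis using weight_pauli_mono[OF p(1), of n] by simp
qed

theorem eaqec_AB_trunc: "eaqec_AB (n-c) k d c R"
proof -
  have sizes: "n - c + c - k = n - k" "n - c + c = n" "k + c \<le> n - c"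
    using two_s_le c_le_s c_le_n code unfolding stab_code_def by linarith+
  let ?fam = "\<lambda>j. if j < c then ea_h j else ea_g (j - c)"
  let ?ext = "\<lambda>j. if j < c then with_X (n-c+j) (ea_h j)
                 else if j - c < c then with_Z (n-c+(j-c)) (ea_g (j-c)) else ea_g (j-c)"
  have fam: "rowspan (n-k) ?fam = rowspan (n-k) R"
    using rowspan_cong[of "n-k" ?fam] ea_generators_eq rowspan_permute[OF ea_index_bij] by simp
  have ext: "stab_code n k d ?ext"
    using ea_extended_generators_eq by (intro stab_code_permute_rows[OF code ea_index_bij]) simp
  show ?thesis
    unfolding eaqec_AB_def Let_def sizes(1,2)
  proof (rule exI[of _ ea_g], rule exI[of _ ea_h], intro conjI)
    show "indep (n-k) R" by (rule indep_trunc_rows)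
    show "rowspan (n-k) R = rowspan (n-k) ?fam" using fam by simp
    show "stab_code n k d ?ext" by (rule ext)
  qed (use sizes(3) trunc_in_pauli ea_g_def ea_h_def ea_g_h_anticommute ea_g_commute ea_h_commute
        ea_g_h_commute ea_distance stab_code_corrects[OF ext] in \<open>auto simp: fam\<close>)
qed

end

section \<open>Standard form of a nondegenerate code\<close>

lemma GF2_subspace_full_step:
  fixes W :: "('a \<Rightarrow> bool) set"
  assumes "finite C" "a \<notin> C"
    and closed: "\<forall>v\<in>W. \<forall>w\<in>W. (\<lambda>x. v x \<noteq> w x) \<in> W"
    and g: "g \<in> W" "g a"
    and annihilator: "\<forall>u. (\<forall>x. x \<notin> insert a C \<longrightarrow> \<not> u x) \<longrightarrow> (\<exists>x. u x) \<longrightarrow>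
                         (\<exists>w\<in>W. odd (card {x\<in>insert a C. u x \<and> w x}))"
    and u: "\<forall>x. x \<notin> C \<longrightarrow> \<not> u x" "\<exists>x. u x"
  shows "\<exists>w\<in>{w\<in>W. \<not> w a}. odd (card {x\<in>C. u x \<and> w x})"
proof -
  let ?dot = "\<lambda>A f h. odd (card {x\<in>A. f x \<and> h x})"
  \<comment> \<open>u' is chosen so that pairing with w and with w + g gives the same value whenever w a holds\<close>
  define u' where "u' x = (if x = a then ?dot C u g else u x)" for x
  have "\<forall>x. x \<notin> insert a C \<longrightarrow> \<not> u' x" using u(1) unfolding u'_def by simp
  moreover have "\<exists>x. u' x" using u \<open>a \<notin> C\<close> unfolding u'_def by metis
  ultimately obtain w where w: "w \<in> W" "?dot (insert a C) u' w"
    using annihilator by blast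
  have "{x\<in>insert a C. u' x \<and> w x} = (if u' a \<and> w a then insert a {x\<in>C. u x \<and> w x} else {x\<in>C. u x \<and> w x})"
    using \<open>a \<notin> C\<close> unfolding u'_def by auto
  then have dot_u': "?dot (insert a C) u' w \<longleftrightarrow> (u' a \<and> w a) \<noteq> ?dot C u w"
    using assms(1,2) by auto
  show ?thesis
  proof (cases "w a")
    case False
    then show ?thesis using w dot_u' by auto
  next
    case True
    have "{x\<in>C. u x \<and> (w x \<noteq> g x)} = {x\<in>C. (u x \<and> w x) \<noteq> (u x \<and> g x)}" by auto
    then have "?dot C u (\<lambda>x. w x \<noteq> g x) \<longleftrightarrow> ?dot C u w \<noteq> ?dot C u g"
      using odd_card_filter_xor[OF assms(1), of "\<lambda>x. u x \<and> w x" "\<lambda>x. u x \<and> g x"] by simp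
    moreover have "(\<lambda>x. w x \<noteq> g x) \<in> {w\<in>W. \<not> w a}" using closed w(1) g True by simp
    ultimately show ?thesis using w(2) dot_u' True unfolding u'_def by auto
  qed
qed

lemma GF2_subspace_full:
  fixes W :: "('a \<Rightarrow> bool) set"
  assumes "finite C"
    and "\<forall>w\<in>W. \<forall>x. x \<notin> C \<longrightarrow> \<not> w x" "(\<lambda>_. False) \<in> W" "\<forall>v\<in>W. \<forall>w\<in>W. (\<lambda>x. v x \<noteq> w x) \<in> W"
    and "\<forall>u. (\<forall>x. x \<notin> C \<longrightarrow> \<not> u x) \<longrightarrow> (\<exists>x. u x) \<longrightarrow> (\<exists>w\<in>W. odd (card {x\<in>C. u x \<and> w x}))"
    and "\<forall>x. x \<notin> C \<longrightarrow> \<not> v x"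
  shows "v \<in> W"
  using assms
proof (induction C arbitrary: W v rule: finite_induct)
  case empty
  then have "v = (\<lambda>_. False)" by auto
  then show ?case using empty by simp
next
  case (insert a C W v)
  obtain g where g: "g \<in> W" "g a"
  proof -
    obtain w where "w \<in> W" "odd (card {x\<in>insert a C. x = a \<and> w x})"
      using insert.prems(4)[rule_format, of "\<lambda>x. x = a"] by auto
    moreover have "{x\<in>insert a C. x = a \<and> w x} = (if w a then {a} else {})" by auto
    ultimately show ?thesis using that by (auto split: if_splits)
  qed
  let ?W' = "{w\<in>W. \<not> w a}"
  have sub: "u \<in> ?W'" if "\<forall>x. x \<notin> C \<longrightarrow> \<not> u x" for u
  proof (rule insert.IH)
    show "\<forall>w\<in>?W'. \<forall>x. x \<notin> C \<longrightarrow> \<not> w x" using insert.prems(1) by auto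
    show "(\<lambda>_. False) \<in> ?W'" using insert.prems(2) by simp
    show "\<forall>v\<in>?W'. \<forall>w\<in>?W'. (\<lambda>x. v x \<noteq> w x) \<in> ?W'" using insert.prems(3) by simp
    show "\<forall>u. (\<forall>x. x \<notin> C \<longrightarrow> \<not> u x) \<longrightarrow> (\<exists>x. u x) \<longrightarrow>
            (\<exists>w\<in>?W'. odd (card {x\<in>C. u x \<and> w x}))"
      using GF2_subspace_full_step[OF insert.hyps insert.prems(3) g insert.prems(4)] by simp
    show "\<forall>x. x \<notin> C \<longrightarrow> \<not> u x" by (rule that)
  qed
  show ?case
  proof (cases "v a")
    case False
    then have "v \<in> ?W'" by (intro sub) (use insert.prems(5) in auto)
    then show ?thesis by simp
  next
    case True
    have "(\<lambda>x. v x \<noteq> g x) \<in> ?W'"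
      by (rule sub) (use True insert.prems(1,5) g in auto)
    then have "(\<lambda>x. v x \<noteq> g x) \<in> W" by simp
    then have "(\<lambda>x. (v x \<noteq> g x) \<noteq> g x) \<in> W" using insert.prems(3) g(1) by simp
    moreover have "(\<lambda>x. (v x \<noteq> g x) \<noteq> g x) = v" by auto
    ultimately show ?thesis by (simp only:)
  qed
qed

definition supported_on :: "nat set \<Rightarrow> pv \<Rightarrow> bool" where
  "supported_on B p \<longleftrightarrow> (\<forall>j. j \<notin> B \<longrightarrow> \<not> fst p j \<and> \<not> snd p j)"

definition bits :: "pv \<Rightarrow> bool \<times> nat \<Rightarrow> bool" where
  "bits p x = (if fst x then fst p (snd x) else snd p (snd x))"

lemma bits_inj:
  assumes "bits p = bits q"
  shows "p = q"
proof -
  have "fst p j = fst q j" "snd p j = snd q j" for j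
    using fun_cong[OF assms, of "(True, j)"] fun_cong[OF assms, of "(False, j)"]
    unfolding bits_def by simp_all
  then show ?thesis by (simp add: prod_eq_iff fun_eq_iff)
qed

lemma bits_padd: "bits (padd p q) = (\<lambda>x. bits p x \<noteq> bits q x)"
  unfolding bits_def padd_def by auto

lemma bits_pzero: "bits pzero = (\<lambda>_. False)"
  unfolding bits_def pzero_def by auto

lemma bits_of_bool_fun: "bits (\<lambda>j. u (True, j), \<lambda>j. u (False, j)) = u"
proof
  show "bits (\<lambda>j. u (True, j), \<lambda>j. u (False, j)) x = u x" for x
    by (cases x; cases "fst x") (simp_all add: bits_def)
qed

lemma card_filter_bool_times:
  assumes "finite B"
  shows "card {x\<in>UNIV \<times> B. F x} = card {j\<in>B. F (True, j)} + card {j\<in>B. F (False, j)}"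
proof -
  have "{x\<in>UNIV \<times> B. F x} = Pair True ` {j\<in>B. F (True, j)} \<union> Pair False ` {j\<in>B. F (False, j)}"
  proof (intro set_eqI iffI)
    fix x assume "x \<in> {x\<in>UNIV \<times> B. F x}"
    then show "x \<in> Pair True ` {j\<in>B. F (True, j)} \<union> Pair False ` {j\<in>B. F (False, j)}"
      by (cases x; cases "fst x") auto
  qed auto
  moreover have "card (Pair True ` {j\<in>B. F (True, j)} \<union> Pair False ` {j\<in>B. F (False, j)}) =
        card {j\<in>B. F (True, j)} + card {j\<in>B. F (False, j)}"
    using assms by (subst card_Un_disjoint) (auto simp: card_image inj_on_def)
  ultimately show ?thesis by simp
qed

lemma anticommutes_on_bits:
  assumes "finite B"
  shows "anticommutes_on B p q \<longleftrightarrow> odd (card {x\<in>UNIV \<times> B. bits p x \<and> bits (prod.swap q) x})"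
proof -
  have "card {x\<in>UNIV \<times> B. bits p x \<and> bits (prod.swap q) x} =
        card {j\<in>B. fst p j \<and> snd q j} + card {j\<in>B. snd p j \<and> fst q j}"
    using card_filter_bool_times[OF assms] unfolding bits_def by simp
  then show ?thesis
    unfolding anticommutes_on_def
    using odd_card_filter_xor[OF assms, of "\<lambda>j. fst p j \<and> snd q j" "\<lambda>j. snd p j \<and> fst q j"] by simp
qed

lemma bits_swap_image_subspace:
  assumes "pauli_subgroup W"
  shows "(\<lambda>_. False) \<in> (\<lambda>p. bits (prod.swap p)) ` W"
    and "\<forall>a\<in>(\<lambda>p. bits (prod.swap p)) ` W. \<forall>b\<in>(\<lambda>p. bits (prod.swap p)) ` W.
           (\<lambda>x. a x \<noteq> b x) \<in> (\<lambda>p. bits (prod.swap p)) ` W"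
proof -
  have "(\<lambda>_. False) = bits (prod.swap pzero)" using bits_pzero unfolding pzero_def by simp
  moreover have "pzero \<in> W" using assms unfolding pauli_subgroup_def by simp
  ultimately show "(\<lambda>_. False) \<in> (\<lambda>p. bits (prod.swap p)) ` W" by (rule image_eqI)
  show "\<forall>a\<in>(\<lambda>p. bits (prod.swap p)) ` W. \<forall>b\<in>(\<lambda>p. bits (prod.swap p)) ` W.
          (\<lambda>x. a x \<noteq> b x) \<in> (\<lambda>p. bits (prod.swap p)) ` W"
  proof (intro ballI)
    fix a b assume "a \<in> (\<lambda>p. bits (prod.swap p)) ` W" "b \<in> (\<lambda>p. bits (prod.swap p)) ` W"
    then obtain p q where "p \<in> W" "q \<in> W" "a = bits (prod.swap p)" "b = bits (prod.swap q)" by blast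
    moreover have "bits (prod.swap (padd p q)) = (\<lambda>x. bits (prod.swap p) x \<noteq> bits (prod.swap q) x)"
      using bits_padd[of "prod.swap p" "prod.swap q"] unfolding padd_def by (simp add: prod.swap_def)
    moreover have "padd p q \<in> W" using assms \<open>p \<in> W\<close> \<open>q \<in> W\<close> unfolding pauli_subgroup_def by blast
    ultimately show "(\<lambda>x. a x \<noteq> b x) \<in> (\<lambda>p. bits (prod.swap p)) ` W" by (metis image_eqI)
  qed
qed

lemma pauli_subgroup_supported_full:
  assumes "finite B" "pauli_subgroup W" "\<forall>w\<in>W. supported_on B w"
    and "\<forall>u. supported_on B u \<longrightarrow> u \<noteq> pzero \<longrightarrow> (\<exists>w\<in>W. anticommutes_on B u w)"
    and "supported_on B v"
  shows "v \<in> W"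
proof -
  let ?C = "(UNIV :: bool set) \<times> B"
  \<comment> \<open>this encoding turns the symplectic form into the dot product (anticommutes_on_bits)\<close>
  let ?enc = "\<lambda>p. bits (prod.swap p)"
  let ?dec = "\<lambda>u. (\<lambda>j. u (True, j), \<lambda>j. u (False, j)) :: pv"
  have support: "\<forall>x. x \<notin> ?C \<longrightarrow> \<not> ?enc p x" if "supported_on B p" for p
    using that unfolding supported_on_def bits_def by auto
  have "?enc v \<in> ?enc ` W"
  proof (rule GF2_subspace_full[of "?C"])
    show "finite (?C)" using assms(1) by (simp add: UNIV_bool)
    show "\<forall>w\<in>?enc ` W. \<forall>x. x \<notin> ?C \<longrightarrow> \<not> w x" using support assms(3) by blast
    show "(\<lambda>_. False) \<in> ?enc ` W" "\<forall>a\<in>?enc ` W. \<forall>b\<in>?enc ` W. (\<lambda>x. a x \<noteq> b x) \<in> ?enc ` W"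
      using bits_swap_image_subspace[OF assms(2)] by blast+
    show "\<forall>u. (\<forall>x. x \<notin> ?C \<longrightarrow> \<not> u x) \<longrightarrow> (\<exists>x. u x) \<longrightarrow>
            (\<exists>w\<in>?enc ` W. odd (card {x\<in>?C. u x \<and> w x}))"
    proof (intro allI impI)
      fix u :: "bool \<times> nat \<Rightarrow> bool"
      assume u: "\<forall>x. x \<notin> ?C \<longrightarrow> \<not> u x" "\<exists>x. u x"
      have bits_dec: "bits (?dec u) = u" by (rule bits_of_bool_fun)
      have "supported_on B (?dec u)" using u(1) unfolding supported_on_def by auto
      moreover have "?dec u \<noteq> pzero"
      proof
        assume "?dec u = pzero"
        then have "u = (\<lambda>_. False)" using bits_dec bits_pzero by simp
        then show False using u(2) by simp
      qed
      ultimately obtain w where "w \<in> W" "anticommutes_on B (?dec u) w" using assms(4) by blast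
      then show "\<exists>w\<in>?enc ` W. odd (card {x\<in>?C. u x \<and> w x})"
        using anticommutes_on_bits[OF assms(1)] bits_dec by auto
    qed
    show "\<forall>x. x \<notin> ?C \<longrightarrow> \<not> ?enc v x" using support assms(5) by blast
  qed
  then obtain w where "w \<in> W" "bits (prod.swap v) = bits (prod.swap w)" by auto
  then have "prod.swap v = prod.swap w" using bits_inj by blast
  then show ?thesis using \<open>w \<in> W\<close> by (metis swap_swap)
qed

definition restrict_to :: "nat set \<Rightarrow> pv \<Rightarrow> pv" where
  "restrict_to B p = (\<lambda>j. fst p j \<and> j \<in> B, \<lambda>j. snd p j \<and> j \<in> B)"

lemma pauli_subgroup_image_restrict_to:
  assumes "pauli_subgroup W"
  shows "pauli_subgroup (restrict_to B ` W)"
  unfolding pauli_subgroup_def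
proof (intro conjI ballI)
  have "restrict_to B pzero = pzero" unfolding restrict_to_def pzero_def by simp
  then show "pzero \<in> restrict_to B ` W" using assms unfolding pauli_subgroup_def by (metis image_eqI)
  fix a b assume "a \<in> restrict_to B ` W" "b \<in> restrict_to B ` W"
  then obtain p q where "p \<in> W" "q \<in> W" "a = restrict_to B p" "b = restrict_to B q" by blast
  moreover have "padd (restrict_to B p) (restrict_to B q) = restrict_to B (padd p q)"
    unfolding restrict_to_def padd_def by auto
  ultimately show "padd a b \<in> restrict_to B ` W" using assms unfolding pauli_subgroup_def by blast
qed

lemma anticommutes_on_supported:
  assumes "finite A" "B \<subseteq> A" "supported_on B p"
  shows "anticommutes_on A p q \<longleftrightarrow> anticommutes_on B p q"
proof -
  have "anticommutes_on (B \<union> (A - B)) p q \<longleftrightarrow> (anticommutes_on B p q \<noteq> anticommutes_on (A - B) p q)"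
    using assms(1,2) by (intro anticommutes_on_Un) (auto intro: rev_finite_subset[OF assms(1)])
  moreover have "B \<union> (A - B) = A" using assms(2) by auto
  moreover have "\<not> anticommutes_on (A - B) p q"
    using assms(3) unfolding supported_on_def by (intro anticommutes_on_vanishing) simp
  ultimately show ?thesis by simp
qed

lemma weight_supported_le:
  assumes "finite B" "supported_on B p"
  shows "weight n p \<le> card B"
  unfolding weight_def using assms unfolding supported_on_def by (intro card_mono) auto

lemma nondegenerate_restrict_to_onto:
  assumes "stab_code n k d r" "nondegenerate n k d r" "B \<subseteq> {..<n}" "card B < d"
    and "supported_on B v"
  shows "\<exists>w\<in>rowspan (n-k) r. restrict_to B w = v"
proof -
  let ?S = "rowspan (n-k) r"
  have fin: "finite B" using assms(3) finite_lessThan finite_subset by blast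
  have "v \<in> restrict_to B ` ?S"
  proof (rule pauli_subgroup_supported_full[OF fin])
    show "pauli_subgroup (restrict_to B ` ?S)"
      using pauli_subgroup_rowspan by (rule pauli_subgroup_image_restrict_to)
    show "\<forall>w\<in>restrict_to B ` ?S. supported_on B w"
      unfolding restrict_to_def supported_on_def by auto
    show "\<forall>u. supported_on B u \<longrightarrow> u \<noteq> pzero \<longrightarrow> (\<exists>w\<in>restrict_to B ` ?S. anticommutes_on B u w)"
    proof (intro allI impI)
      fix u assume u: "supported_on B u" "u \<noteq> pzero"
      show "\<exists>w\<in>restrict_to B ` ?S. anticommutes_on B u w"
      proof (rule ccontr)
        assume "\<not> ?thesis"
        then have "\<not> anticommutes_on B u (restrict_to B (r i))" if "i < n-k" for i
          using gen_in_rowspan[OF that] by blast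
        then have "commute n u (r i)" if "i < n-k" for i
          using that anticommutes_on_supported[OF finite_lessThan assms(3) u(1)]
            anticommutes_on_cong[of B u u "r i" "restrict_to B (r i)"]
          unfolding commute_iff_not_anticommutes_on restrict_to_def by simp
        moreover have "u \<in> pauli n" using u(1) assms(3) unfolding supported_on_def pauli_def by force
        ultimately have "u \<in> normalizer n ?S" unfolding normalizer_rowspan by simp
        then have "d \<le> weight n u" using assms(2) u(2) unfolding nondegenerate_def by simp
        then show False using weight_supported_le[OF fin u(1), of n] assms(4) by simp
      qed
    qed
  qed (rule assms(5))
  then show ?thesis by auto
qed

abbreviation list_span :: "pv list \<Rightarrow> pv set" where
  "list_span L \<equiv> rowspan (length L) ((!) L)"

abbreviation list_indep :: "pv list \<Rightarrow> bool" where
  "list_indep L \<equiv> indep (length L) ((!) L)"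

lemma psum_append: "T \<subseteq> {..<length L} \<Longrightarrow> psum ((!) (L @ M)) T = psum ((!) L) T"
  by (rule psum_cong) (auto simp: nth_append)

lemma list_span_append_mono: "list_span L \<subseteq> list_span (L @ M)"
proof
  fix p assume "p \<in> list_span L"
  then obtain T where T: "T \<subseteq> {..<length L}" "p = psum ((!) L) T" unfolding rowspan_def by blast
  then have "T \<subseteq> {..<length (L @ M)}" by auto
  then show "p \<in> list_span (L @ M)"
    using psum_append[OF T(1), of M] psum_in_rowspan T(2) by metis
qed

lemma list_indep_snoc:
  assumes "list_indep L" "v \<notin> list_span L"
  shows "list_indep (L @ [v])"
  unfolding indep_def
proof (intro allI impI notI)
  fix T assume T: "T \<subseteq> {..<length (L @ [v])}" "T \<noteq> {}" and zero: "psum ((!) (L @ [v])) T = pzero"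
  let ?T' = "T - {length L}"
  have T': "?T' \<subseteq> {..<length L}" "finite ?T'" using T(1) by (auto simp: less_Suc_eq intro: rev_finite_subset)
  show False
  proof (cases "length L \<in> T")
    case False
    then have "psum ((!) L) T = pzero" using T' zero psum_append[of T L "[v]"] by simp
    then show False using assms(1) T' False T(2) unfolding indep_def by simp
  next
    case True
    then have "T = insert (length L) ?T'" by auto
    then have "psum ((!) (L @ [v])) T = padd (psum ((!) L) ?T') v"
      using psum_insert[OF T'(2), of "length L"] psum_append[OF T'(1), of "[v]"] by simp
    then have "v = psum ((!) L) ?T'" using zero padd_cancel_right[of "psum ((!) L) ?T'" v] by simp
    then show False using assms(2) psum_in_rowspan[OF T'(1)] by simp
  qed
qed

lemma list_indep_extend:
  fixes v :: "nat \<Rightarrow> pv"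
  assumes "list_indep L"
  shows "\<exists>M. set M \<subseteq> v ` {..<m} \<and> list_indep (L @ M) \<and> (\<forall>j<m. v j \<in> list_span (L @ M))"
proof (induction m)
  case 0
  then show ?case using assms by (intro exI[of _ "[]"]) simp
next
  case (Suc m)
  then obtain M where M: "set M \<subseteq> v ` {..<m}" "list_indep (L @ M)" "\<forall>j<m. v j \<in> list_span (L @ M)"
    by blast
  show ?case
  proof (cases "v m \<in> list_span (L @ M)")
    case True
    then show ?thesis using M by (intro exI[of _ M]) (auto simp: less_Suc_eq)
  next
    case False
    have "\<forall>j<m. v j \<in> list_span (L @ M @ [v m])"
      using M(3) list_span_append_mono[of "L @ M" "[v m]"] by auto
    moreover have "v m \<in> list_span (L @ M @ [v m])"
      using gen_in_rowspan[of "length (L @ M)" "length (L @ M @ [v m])" "(!) (L @ M @ [v m])"]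
      by (simp add: nth_append)
    moreover have "list_indep (L @ M @ [v m])" using list_indep_snoc[OF M(2) False] by simp
    ultimately show ?thesis using M(1) by (intro exI[of _ "M @ [v m]"]) (auto simp: less_Suc_eq)
  qed
qed

locale nondegenerate_code =
  fixes n k d :: nat and r :: "nat \<Rightarrow> pv" and s :: nat
  assumes code: "stab_code n k d r" and nondeg: "nondegenerate n k d r" and s_lt_d: "s < d"
begin

lemma s_le_n: "s \<le> n"
  using s_lt_d stab_code_distance_le[OF code] by simp

definition tail_unit :: "nat \<Rightarrow> pv" where
  "tail_unit i = (if i < s then Xq (n-s+i) else Zq (n-s+(i-s)))"

definition tail_basis :: "nat \<Rightarrow> pv" where
  "tail_basis i = (SOME w. w \<in> rowspan (n-k) r \<and> restrict_to {n-s..<n} w = tail_unit i)"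

lemma tail_basis:
  assumes "i < 2*s"
  shows "tail_basis i \<in> rowspan (n-k) r" "restrict_to {n-s..<n} (tail_basis i) = tail_unit i"
proof -
  have "supported_on {n-s..<n} (tail_unit i)"
    using assms s_le_n unfolding supported_on_def tail_unit_def Xq_def Zq_def by auto
  moreover have "card {n-s..<n} < d" using s_lt_d s_le_n by simp
  moreover have "{n-s..<n} \<subseteq> {..<n}" by auto
  ultimately have "\<exists>w. w \<in> rowspan (n-k) r \<and> restrict_to {n-s..<n} w = tail_unit i"
    using nondegenerate_restrict_to_onto[OF code nondeg, of "{n-s..<n}" "tail_unit i"] by blast
  then show "tail_basis i \<in> rowspan (n-k) r" "restrict_to {n-s..<n} (tail_basis i) = tail_unit i"
    unfolding tail_basis_def by (metis (mono_tags, lifting) someI_ex)+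
qed

lemma tail_basis_tail:
  assumes "i < 2*s" "b < s"
  shows "fst (tail_basis i) (n-s+b) \<longleftrightarrow> i = b" "snd (tail_basis i) (n-s+b) \<longleftrightarrow> i = s+b"
proof -
  have "n-s+b \<in> {n-s..<n}" using assms(2) s_le_n by auto
  then have "fst (tail_basis i) (n-s+b) = fst (tail_unit i) (n-s+b)"
       "snd (tail_basis i) (n-s+b) = snd (tail_unit i) (n-s+b)"
    unfolding tail_basis(2)[OF assms(1), symmetric] by (simp_all add: restrict_to_def)
  then show "fst (tail_basis i) (n-s+b) \<longleftrightarrow> i = b" "snd (tail_basis i) (n-s+b) \<longleftrightarrow> i = s+b"
    using assms unfolding tail_unit_def Xq_def Zq_def by auto
qed

lemma psum_tail_basis:
  assumes "T \<subseteq> {..<2*s}" "b < s"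
  shows "fst (psum tail_basis T) (n-s+b) \<longleftrightarrow> b \<in> T" "snd (psum tail_basis T) (n-s+b) \<longleftrightarrow> s+b \<in> T"
proof -
  have "{i\<in>T. fst (tail_basis i) (n-s+b)} = (if b \<in> T then {b} else {})"
       "{i\<in>T. snd (tail_basis i) (n-s+b)} = (if s+b \<in> T then {s+b} else {})"
    using tail_basis_tail assms by auto
  then show "fst (psum tail_basis T) (n-s+b) \<longleftrightarrow> b \<in> T" "snd (psum tail_basis T) (n-s+b) \<longleftrightarrow> s+b \<in> T"
    unfolding psum_def by simp_all
qed

lemma indep_tail_basis: "indep (2*s) tail_basis"
  unfolding indep_def
proof (intro allI impI notI)
  fix T assume T: "T \<subseteq> {..<2*s}" "T \<noteq> {}" and zero: "psum tail_basis T = pzero"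
  then obtain i where i: "i \<in> T" "i < 2*s" by blast
  show False
  proof (cases "i < s")
    case True
    then show False using psum_tail_basis(1)[OF T(1) True] i zero unfolding pzero_def by simp
  next
    case False
    then have "i - s < s" "s + (i - s) = i" using i by auto
    then have "snd (psum tail_basis T) (n-s+(i-s))" using psum_tail_basis(2)[OF T(1), of "i-s"] i(1) by simp
    then show False using zero unfolding pzero_def by simp
  qed
qed

definition tail_coords :: "pv \<Rightarrow> nat set" where
  "tail_coords v = {i. i < 2*s \<and> (if i < s then fst v (n-s+i) else snd v (n-s+(i-s)))}"

definition clear_tail :: "pv \<Rightarrow> pv" where
  "clear_tail v = padd v (psum tail_basis (tail_coords v))"

lemma clear_tail_vanishes:
  assumes "j \<in> {n-s..<n}"
  shows "\<not> fst (clear_tail v) j \<and> \<not> snd (clear_tail v) j"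
proof -
  define b where "b = j - (n-s)"
  have b: "b < s" "j = n-s+b" using assms s_le_n unfolding b_def by auto
  have "tail_coords v \<subseteq> {..<2*s}" unfolding tail_coords_def by auto
  from psum_tail_basis[OF this b(1)] b show ?thesis
    unfolding clear_tail_def padd_def tail_coords_def by simp
qed

lemma clear_tail_in_rowspan: "v \<in> rowspan (n-k) r \<Longrightarrow> clear_tail v \<in> rowspan (n-k) r"
proof -
  assume v: "v \<in> rowspan (n-k) r"
  have "tail_coords v \<subseteq> {..<2*s}" unfolding tail_coords_def by auto
  then have "psum tail_basis (tail_coords v) \<in> rowspan (n-k) r"
    using tail_basis(1) pauli_subgroup_rowspan
    by (intro psum_in_subgroup) (auto intro: rev_finite_subset[OF finite_lessThan])
  then show ?thesis unfolding clear_tail_def using v by (rule rowspan_padd[rotated])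
qed

lemma padd_clear_tail: "padd (clear_tail v) (psum tail_basis (tail_coords v)) = v"
  unfolding clear_tail_def by simp

definition tail_rows :: "pv list" where
  "tail_rows = map tail_basis [0..<2*s]"

definition extra_rows :: "pv list" where
  "extra_rows = (SOME M. set M \<subseteq> (\<lambda>j. clear_tail (r j)) ` {..<n-k} \<and> list_indep (tail_rows @ M) \<and>
                         (\<forall>j<n-k. clear_tail (r j) \<in> list_span (tail_rows @ M)))"

definition std_rows :: "pv list" where
  "std_rows = tail_rows @ extra_rows"

lemma list_indep_tail_rows: "list_indep tail_rows"
proof -
  have "indep (2*s) ((!) tail_rows) = indep (2*s) tail_basis"
    unfolding tail_rows_def by (rule indep_cong) simp
  moreover have "length tail_rows = 2*s" unfolding tail_rows_def by simp
  ultimately show ?thesis using indep_tail_basis by simp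
qed

lemma extra_rows:
  "set extra_rows \<subseteq> (\<lambda>j. clear_tail (r j)) ` {..<n-k}" "list_indep std_rows"
  "\<forall>j<n-k. clear_tail (r j) \<in> list_span std_rows"
  using someI_ex[OF list_indep_extend[OF list_indep_tail_rows, of "\<lambda>j. clear_tail (r j)" "n-k"]]
  unfolding extra_rows_def[symmetric] std_rows_def by blast+

lemma std_rows_nth:
  assumes "i < length std_rows"
  obtains "i < 2*s" "std_rows ! i = tail_basis i"
    | j where "2*s \<le> i" "j < n-k" "std_rows ! i = clear_tail (r j)"
proof (cases "i < 2*s")
  case True
  then show ?thesis using that(1) unfolding std_rows_def tail_rows_def by (simp add: nth_append)
next
  case False
  then have "std_rows ! i \<in> set extra_rows"
    using assms unfolding std_rows_def tail_rows_def by (simp add: nth_append)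
  then show ?thesis using that(2) False extra_rows(1) by auto
qed

lemma list_span_std_rows: "list_span std_rows = rowspan (n-k) r"
proof
  have "std_rows ! i \<in> rowspan (n-k) r" if "i < length std_rows" for i
    using that
  proof (cases rule: std_rows_nth)
    case 1
    then show ?thesis using tail_basis(1) by simp
  next
    case (2 j)
    then show ?thesis using clear_tail_in_rowspan gen_in_rowspan by simp
  qed
  then show "list_span std_rows \<subseteq> rowspan (n-k) r"
    by (intro rowspan_least pauli_subgroup_rowspan) auto
  have tail_sums: "psum tail_basis T \<in> list_span std_rows" if "T \<subseteq> {..<2*s}" for T
  proof -
    have "psum tail_basis T = psum ((!) tail_rows) T"
      using that unfolding tail_rows_def by (intro psum_cong) auto
    then have "psum tail_basis T \<in> list_span tail_rows"
      using that psum_in_rowspan[of T "length tail_rows"] unfolding tail_rows_def by simp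
    then show ?thesis using list_span_append_mono unfolding std_rows_def by blast
  qed
  have "r j \<in> list_span std_rows" if "j < n-k" for j
  proof -
    have "tail_coords (r j) \<subseteq> {..<2*s}" unfolding tail_coords_def by auto
    then have "padd (clear_tail (r j)) (psum tail_basis (tail_coords (r j))) \<in> list_span std_rows"
      using extra_rows(3) that tail_sums by (intro rowspan_padd) auto
    then show ?thesis by (simp only: padd_clear_tail)
  qed
  then show "rowspan (n-k) r \<subseteq> list_span std_rows"
    by (intro rowspan_least pauli_subgroup_rowspan) auto
qed

lemma length_std_rows: "length std_rows = n-k"
proof -
  have "(2::nat) ^ length std_rows = 2 ^ (n-k)"
    using card_rowspan[OF extra_rows(2)] card_rowspan[of "n-k" r] code list_span_std_rows
    unfolding stab_code_def by simp
  then show ?thesis by simp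
qed

lemma std_form_std_rows: "std_form n (n-k) s ((!) std_rows)"
proof -
  have "2*s \<le> n-k" using length_std_rows unfolding std_rows_def tail_rows_def by simp
  moreover have "(fst (std_rows ! i) j \<longleftrightarrow> i < s \<and> j - (n-s) = i) \<and>
                 (snd (std_rows ! i) j \<longleftrightarrow> s \<le> i \<and> i < 2*s \<and> j - (n-s) = i - s)"
    if "i < n-k" "n-s \<le> j" "j < n" for i j
  proof -
    define b where "b = j - (n-s)"
    have b: "b < s" "j = n-s+b" using that s_le_n unfolding b_def by auto
    from that(1) have "i < length std_rows" by (simp add: length_std_rows)
    then show ?thesis
    proof (cases rule: std_rows_nth)
      case 1
      have "j - (n-s) = b" unfolding b_def ..
      then show ?thesis using tail_basis_tail[OF 1(1) b(1)] b 1 by auto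
    next
      case (2 j')
      have "\<not> fst (std_rows ! i) j \<and> \<not> snd (std_rows ! i) j"
        using 2(3) clear_tail_vanishes[of j] that(2,3) by simp
      then show ?thesis using 2(1) by simp
    qed
  qed
  ultimately show ?thesis unfolding std_form_def using s_le_n by blast
qed

end

lemma qperm_id [simp]: "qperm id p = p"
  unfolding qperm_def by simp

theorem theorem1:
  fixes n k d :: nat and r :: "nat \<Rightarrow> pv"
  assumes "stab_code n k d r"
  shows "(\<forall>s c. std_form n (n - k) s r \<and> c \<le> s \<longrightarrow>
            eaqec_AB (n - c) k d c (\<lambda>i. trunc (n - c) (r i)))
       \<and> (nondegenerate n k d r \<longrightarrow>
            (\<exists>\<sigma> s r'. bij_betw \<sigma> {..<n} {..<n} \<and>
                (\<forall>j. n \<le> j \<longrightarrow> \<sigma> j = j) \<and>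
                std_form n (n - k) s r' \<and>
                rowspan (n - k) r' = qperm \<sigma> ` rowspan (n - k) r \<and>
                d - 1 \<le> s \<and> s \<le> (n - k) div 2))"
proof (intro conjI allI impI)
  fix s c
  assume "std_form n (n - k) s r \<and> c \<le> s"
  then interpret std_form_code n k d r s c
    using assms by unfold_locales auto
  show "eaqec_AB (n - c) k d c (\<lambda>i. trunc (n - c) (r i))" by (rule eaqec_AB_trunc)
next
  assume "nondegenerate n k d r"
  then interpret nondegenerate_code n k d r "d - 1"
    using assms stab_code_distance_pos by unfold_locales auto
  have "2 * (d - 1) \<le> n - k" using std_form_std_rows unfolding std_form_def by simp
  then show "\<exists>\<sigma> s r'. bij_betw \<sigma> {..<n} {..<n} \<and> (\<forall>j. n \<le> j \<longrightarrow> \<sigma> j = j) \<and>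
                std_form n (n - k) s r' \<and> rowspan (n - k) r' = qperm \<sigma> ` rowspan (n - k) r \<and>
                d - 1 \<le> s \<and> s \<le> (n - k) div 2"
    using std_form_std_rows list_span_std_rows length_std_rows
    by (intro exI[of _ id] exI[of _ "d - 1"] exI[of _ "(!) std_rows"]) auto
qed

end
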